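(* Let $m,n$ be positive integers with $m>n$ and $m\ge 3$, and let $q$ be an odd prime. Let $X,y_1,y_2$ be positive integers with $X>1$, $\gcd(X,q)=1$, $y_1>y_2$ and $X^m-X^n=q^{y_1}-q^{y_2}$. Put $E=e_q(X)$, $N=(m-n)/E$ (an integer) and $e=\nu_q(N)$, and assume $N$ is odd. With \[ A_E(t)=\begin{cases} t-1 & E=1,\\ t^{E-1}+\cdots+t+1 & E>1,\end{cases}\quad B_{n,E}(t)=\begin{cases} t^n & E=1,\\ t^n(t-1) & E>1,\end{cases}\quad I_{E,N}(t)=\sum_{j=0}^{N-1}t^{Ej}, \] one has $y_2>e$, $I_{E,N}(X)\equiv 0\pmod{q^e}$, and there is a positive integer $K$ with $\gcd(K,q)=1$ such that \[ A_E(X)=K\,q^{y_2-e},\qquad B_{n,E}(X)\,I_{E,N}(X)\,K=q^e(q^{y_1-y_2}-1). \] Moreover: (i) if $E=1$, then $y_1>2(y_2-e)$, and $y_1>m(y_2-e)$ if $K>1$; (ii) if $E>1$, then $y_1\ge \frac{m}{E-1}(y_2-e)$ if $K>1$, and $y_1\ge 2(y_2-e)$ if $\dfrac{(y_2-e)(m-2E+2)+E-1}{m+\delta(E-1)}\ge\dfrac{\log 2}{\log q}$, where $\delta=1$ if $X^m>q^{y_1}$ and $\delta=0$ if $X^m<q^{y_1}$.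
   Context: For a positive integer $M$ and an integer $A$ coprime to $M$, $e_M(A)$ denotes the least positive integer $e$ such that $A^e\equiv \pm1\pmod M$. For a prime $p$, $\nu_p$ denotes the $p$-adic valuation. *)

theory Defs
  imports Complex_Main "HOL-Number_Theory.Number_Theory"
begin

definition pm_ord :: "int \<Rightarrow> int \<Rightarrow> nat" where
  "pm_ord M A = (LEAST e::nat. e > 0 \<and> ([A ^ e = 1] (mod M) \<or> [A ^ e = -1] (mod M)))"

definition A_poly :: "nat \<Rightarrow> int \<Rightarrow> int" where
  "A_poly E t = (if E = 1 then t - 1 else (\<Sum>j<E. t ^ j))"

definition B_poly :: "nat \<Rightarrow> nat \<Rightarrow> int \<Rightarrow> int" where
  "B_poly n E t = (if E = 1 then t ^ n else t ^ n * (t - 1))"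

definition I_poly :: "nat \<Rightarrow> nat \<Rightarrow> int \<Rightarrow> int" where
  "I_poly E N t = (\<Sum>j<N. t ^ (E * j))"

end

theory Submission
  imports Defs
begin

text \<open>With \<open>D = m - n\<close> the equation reads \<open>X ^ n (X ^ D - 1) = q ^ y2 (q ^ (y1 - y2) - 1)\<close>, so
  \<open>q ^ y2\<close> is exactly the \<open>q\<close>-part of \<open>X ^ D - 1\<close>. As \<open>X ^ D \<equiv> 1 (mod q)\<close> and \<open>D / E\<close> is odd,
  minimality of \<open>E\<close> gives \<open>E dvd D\<close> and \<open>X ^ E \<equiv> 1\<close> (not \<open>-1\<close>) modulo \<open>q\<close>. Then
  \<open>X ^ D - 1 = (X ^ E - 1) I_{E,N}(X)\<close>, and lifting the exponent gives \<open>\<nu>_q(I_{E,N}(X)) = \<nu>_q(N) = e\<close>,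
  so \<open>\<nu>_q(X ^ E - 1) = y2 - e\<close>; this valuation passes to \<open>A_E(X)\<close>, since for \<open>E > 1\<close> the factor
  \<open>X - 1\<close> is prime to \<open>q\<close>. The inequalities compare sizes: \<open>q ^ (y2 - e) \<le> A_E(X) < 2 X ^ (E - 1)\<close>
  (or \<open>\<le> X - 1\<close> if \<open>E = 1\<close>) against \<open>X ^ (m - 1) (X - 1) \<le> X ^ m - X ^ n < q ^ y1\<close>.\<close>

lemma sum_power_mult_split:
  fixes Y :: "'a::comm_semiring_1"
  shows "(\<Sum>j<a * b. Y ^ j) = (\<Sum>i<a. Y ^ i) * (\<Sum>k<b. (Y ^ a) ^ k)"
proof -
  have "(\<Sum>j<b * a. Y ^ j) = (\<Sum>k<b. \<Sum>j\<in>{k * a..<k * a + a}. Y ^ j)"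
    by (rule sum.nat_group[symmetric])
  also have "\<dots> = (\<Sum>k<b. (Y ^ a) ^ k * (\<Sum>i<a. Y ^ i))"
  proof (rule sum.cong)
    fix k
    have "(\<Sum>j\<in>{0 + k * a..<a + k * a}. Y ^ j) = (\<Sum>i<a. Y ^ (k * a + i))"
      by (simp only: sum.atLeastLessThan_shift_bounds atLeast0LessThan comp_def)
    then show "(\<Sum>j\<in>{k * a..<k * a + a}. Y ^ j) = (Y ^ a) ^ k * (\<Sum>i<a. Y ^ i)"
      by (simp add: power_add power_mult sum_distrib_right mult_ac add.commute)
  qed simp
  finally show ?thesis
    by (simp add: mult.commute sum_distrib_left)
qed

lemma power_one_plus_mult_cong:
  fixes t p :: nat
  shows "[(1 + t * p) ^ j = 1 + j * t * p] (mod p\<^sup>2)"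
proof (induction j)
  case (Suc j)
  have "[(1 + t * p) ^ j * (1 + t * p) = (1 + j * t * p) * (1 + t * p)] (mod p\<^sup>2)"
    by (rule cong_mult[OF Suc cong_refl])
  then have "[(1 + t * p) ^ Suc j = (1 + j * t * p) * (1 + t * p)] (mod p\<^sup>2)"
    by (simp only: power_Suc2)
  also have "(1 + j * t * p) * (1 + t * p) = (1 + Suc j * t * p) + j * t * t * p\<^sup>2"
    by (simp add: algebra_simps power2_eq_square)
  also have "[\<dots> = 1 + Suc j * t * p] (mod p\<^sup>2)"
    by (simp add: cong_def)
  finally show ?case .
qed simp

lemma multiplicity_sum_powers_prime:
  fixes p Y :: nat
  assumes p: "prime p" "odd p" and Y: "[Y = 1] (mod p)"
  shows "multiplicity p (\<Sum>j<p. Y ^ j) = 1"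
proof -
  have "Y \<noteq> 0"
    using Y prime_gt_1_nat[OF p(1)] by (cases Y) (auto simp: cong_def)
  moreover obtain t where "Y - 1 = p * t"
    using cong_to_1_nat[OF Y] by (auto elim: dvdE)
  ultimately have Y_eq: "Y = 1 + t * p"
    by (simp add: mult.commute)
  obtain r where r: "p = Suc (2 * r)"
    using p(2) oddE by fastforce
  have gauss: "(\<Sum>j<p. j) = p * r"
    using gauss_sum_nat[of "2 * r"] by (simp add: r lessThan_Suc_atMost atLeast0AtMost)
  have "[(\<Sum>j<p. Y ^ j) = (\<Sum>j<p. 1 + j * t * p)] (mod p\<^sup>2)"
    unfolding Y_eq by (intro cong_sum power_one_plus_mult_cong)
  also have "(\<Sum>j<p. 1 + j * t * p) = (\<Sum>j<p. 1) + (\<Sum>j<p. j) * (t * p)"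
    by (simp only: sum.distrib sum_distrib_right mult.assoc)
  also have "\<dots> = p + t * r * p\<^sup>2"
    by (simp add: gauss power2_eq_square mult_ac)
  also have "[\<dots> = p] (mod p\<^sup>2)"
    by (simp add: cong_def)
  finally have sum_cong: "[(\<Sum>j<p. Y ^ j) = p] (mod p\<^sup>2)" .
  show ?thesis
  proof (rule multiplicity_eqI)
    show "p ^ 1 dvd (\<Sum>j<p. Y ^ j)"
      using cong_dvd_iff[OF cong_dvd_modulus_nat[OF sum_cong, of p]] by simp
    have "\<not> p\<^sup>2 dvd p"
      using prime_gt_1_nat[OF p(1)] by (auto dest!: dvd_imp_le simp: power2_eq_square)
    then show "\<not> p ^ Suc 1 dvd (\<Sum>j<p. Y ^ j)"
      using cong_dvd_iff[OF sum_cong] by (simp add: numeral_2_eq_2)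
  qed
qed

text \<open>Lifting the exponent for the geometric sum: write \<open>N = p * N'\<close> and split off the
  block of the first \<open>p\<close> powers, whose valuation is exactly one.\<close>

lemma multiplicity_sum_powers:
  fixes p Y N :: nat
  assumes p: "prime p" "odd p" and "[Y = 1] (mod p)" and "0 < N"
  shows "multiplicity p (\<Sum>j<N. Y ^ j) = multiplicity p N"
  using assms(4,3)
proof (induction N arbitrary: Y rule: less_induct)
  case (less N)
  have "Y \<noteq> 0"
    using less.prems(2) prime_gt_1_nat[OF p(1)] by (cases Y) (auto simp: cong_def)
  have sum_pos: "0 < (\<Sum>j<k. Z ^ j)" if "0 < k" "Z \<noteq> 0" for k Z :: nat
    using that by (auto intro: sum_pos2[of _ 0])
  show ?case
  proof (cases "p dvd N")
    case False
    have "[(\<Sum>j<N. Y ^ j) = (\<Sum>j<N. 1)] (mod p)"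
      using cong_pow[OF less.prems(2)] by (intro cong_sum) simp
    then have "\<not> p dvd (\<Sum>j<N. Y ^ j)"
      using False cong_dvd_iff by fastforce
    then show ?thesis
      using False by (simp add: not_dvd_imp_multiplicity_0)
  next
    case True
    then obtain N' where N: "N = p * N'" ..
    have "0 < N'" "N' < N"
      using N less.prems(1) prime_gt_1_nat[OF p(1)] by auto
    have "[Y ^ p = 1] (mod p)"
      using cong_pow[OF less.prems(2), of p] by simp
    then have IH: "multiplicity p (\<Sum>k<N'. (Y ^ p) ^ k) = multiplicity p N'"
      using less.IH[OF \<open>N' < N\<close> \<open>0 < N'\<close>] by blast
    have "multiplicity p (\<Sum>j<N. Y ^ j)
        = multiplicity p ((\<Sum>i<p. Y ^ i) * (\<Sum>k<N'. (Y ^ p) ^ k))"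
      by (simp add: N sum_power_mult_split)
    also have "\<dots> = multiplicity p (\<Sum>i<p. Y ^ i) + multiplicity p (\<Sum>k<N'. (Y ^ p) ^ k)"
      using sum_pos[of p Y] sum_pos[of N' "Y ^ p"] \<open>0 < N'\<close> \<open>Y \<noteq> 0\<close> p(1) prime_gt_0_nat[OF p(1)]
      by (intro prime_elem_multiplicity_mult_distrib) auto
    also have "\<dots> = Suc (multiplicity p N')"
      using multiplicity_sum_powers_prime[OF p less.prems(2)] IH by simp
    also have "\<dots> = multiplicity p N"
      using \<open>0 < N'\<close> prime_gt_1_nat[OF p(1)] by (simp add: N multiplicity_times_same)
    finally show ?thesis .
  qed
qed

lemma pm_ord_spec:
  assumes "0 < D" "[A ^ D = 1] (mod M) \<or> [A ^ D = - 1] (mod M)"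
  shows "0 < pm_ord M A \<and> ([A ^ pm_ord M A = 1] (mod M) \<or> [A ^ pm_ord M A = - 1] (mod M))"
  unfolding pm_ord_def by (rule LeastI[of _ D]) (use assms in simp)

lemma pm_ord_minimal:
  assumes "0 < r" "r < pm_ord M A"
  shows "\<not> [A ^ r = 1] (mod M)" "\<not> [A ^ r = - 1] (mod M)"
  using not_less_Least[OF assms(2)[unfolded pm_ord_def]] assms(1) by auto

lemma pm_ord_dvd:
  assumes "0 < D" "[A ^ D = 1] (mod M)"
  shows "pm_ord M A dvd D"
proof -
  define E where "E = pm_ord M A"
  obtain c where c: "c = 1 \<or> c = - 1" "[A ^ E = c] (mod M)"
    using pm_ord_spec[of D A M] assms unfolding E_def by blast
  have c_power: "c ^ a = 1 \<or> c ^ a = - 1" for a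
    using c(1) by (cases "even a") auto
  have "0 < E"
    using pm_ord_spec[of D A M] assms unfolding E_def by blast
  define r where "r = D mod E"
  have "[1 = (A ^ E) ^ (D div E) * A ^ r] (mod M)"
    using assms(2) by (simp add: r_def cong_sym power_mult[symmetric] power_add[symmetric])
  also have "[(A ^ E) ^ (D div E) * A ^ r = c ^ (D div E) * A ^ r] (mod M)"
    by (intro cong_mult cong_pow c(2) cong_refl)
  finally have "[c ^ (D div E) * 1 = c ^ (D div E) * (c ^ (D div E) * A ^ r)] (mod M)"
    by (rule cong_scalar_left)
  then have "[A ^ r = c ^ (D div E)] (mod M)"
    using c_power[of "D div E"] by (auto simp: cong_sym_eq)
  then have "r = 0"
    using c_power[of "D div E"] pm_ord_minimal[of r M A] \<open>0 < E\<close>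
    unfolding E_def r_def by (metis mod_less_divisor neq0_conv)
  then show ?thesis
    unfolding E_def r_def by (simp add: mod_eq_0_iff_dvd)
qed

lemma pm_ord_cong_one:
  assumes "0 < D" "[A ^ D = 1] (mod M)" "odd (D div pm_ord M A)" "2 < M"
  shows "[A ^ pm_ord M A = 1] (mod M)"
proof -
  define E where "E = pm_ord M A"
  obtain c where c: "c = 1 \<or> c = - 1" "[A ^ E = c] (mod M)"
    using pm_ord_spec[of D A M] assms unfolding E_def by blast
  have "[1 = (A ^ E) ^ (D div E)] (mod M)"
    using assms(2) pm_ord_dvd[OF assms(1,2)]
    by (simp add: E_def cong_sym power_mult[symmetric])
  also have "[(A ^ E) ^ (D div E) = c ^ (D div E)] (mod M)"
    by (intro cong_pow c(2))
  also have "c ^ (D div E) = c"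
    using c(1) assms(3) unfolding E_def by auto
  finally have "c = 1"
    using c(1) assms(4) by (auto simp: cong_iff_dvd_diff dest: zdvd_imp_le)
  then show ?thesis
    using c(2) unfolding E_def by simp
qed

lemma multiplicity_of_nat: "multiplicity (int p) (int x) = multiplicity p x"
  unfolding multiplicity_def by (simp flip: of_nat_power add: of_nat_dvd_iff)

lemma I_poly_geometric: "(t ^ E - 1) * I_poly E N t = t ^ (E * N) - 1"
  by (simp add: I_poly_def power_diff_1_eq[of "t ^ E" N] power_mult)

lemma A_poly_geometric: "E \<noteq> 1 \<Longrightarrow> (t - 1) * A_poly E t = t ^ E - 1"
  by (simp add: A_poly_def power_diff_1_eq)

lemma B_poly_mult_A_poly: "B_poly n E t * A_poly E t = t ^ n * (t ^ E - 1)"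
  using A_poly_geometric[of E t] by (simp add: B_poly_def A_poly_def mult.assoc)

lemma I_poly_of_nat: "I_poly E N (int X) = int (\<Sum>j<N. (X ^ E) ^ j)"
  by (simp add: I_poly_def power_mult)

text \<open>Raising \<open>Q ^ d * u < X ^ (F + 1)\<close> to the power \<open>M + 1\<close> and using \<open>X \<le> u\<close> gives
  \<open>Q ^ (d * (M + 1)) < (X ^ M * u) ^ F\<close>; multiplying by \<open>(Q ^ d) ^ F\<close> and comparing with the
  \<open>F\<close>-th power of the second hypothesis bounds the exponents.\<close>

lemma exponent_bound_of_power_bounds:
  fixes X u Q :: "'a::linordered_idom"
  assumes "0 < X" "X \<le> u" "1 < Q"
    and lower: "Q ^ d * u < X ^ (F + 1)" and upper: "X ^ M * u * Q ^ d < Q ^ y"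
  shows "(M + F + 1) * d < F * y"
proof -
  have "0 < u"
    using assms(1,2) by simp
  have "Q ^ (d * (M + 1)) * u ^ (M + 1) = (Q ^ d * u) ^ (M + 1)"
    by (simp only: power_mult power_mult_distrib)
  also have "\<dots> < (X ^ (F + 1)) ^ (M + 1)"
    using lower \<open>0 < u\<close> assms(3) by (intro power_strict_mono) auto
  also have "\<dots> = X ^ (M * F) * X ^ F * X ^ (M + 1)"
    by (simp flip: power_mult power_add add: algebra_simps)
  also have "\<dots> \<le> X ^ (M * F) * u ^ F * u ^ (M + 1)"
    using assms(1,2) by (intro mult_mono power_mono) auto
  finally have "Q ^ (d * (M + 1)) < (X ^ M * u) ^ F"
    using \<open>0 < u\<close> by (simp add: power_mult power_mult_distrib)
  then have "Q ^ (d * (M + 1)) * (Q ^ d) ^ F < (X ^ M * u) ^ F * (Q ^ d) ^ F"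
    using assms(3) by simp
  also have "\<dots> = (X ^ M * u * Q ^ d) ^ F"
    by (simp add: power_mult_distrib)
  also have "\<dots> \<le> (Q ^ y) ^ F"
    using upper assms(1,3) \<open>0 < u\<close> by (intro power_mono) auto
  finally have "Q ^ ((M + F + 1) * d) < Q ^ (F * y)"
    by (simp flip: power_mult power_add add: algebra_simps)
  then show ?thesis
    using assms(3) by simp
qed

text \<open>Taking logarithms, the two hypotheses combine to \<open>(y + 1 - 2 d) (E - 1) > 0\<close>.\<close>

lemma exponent_bound_of_log_bound:
  fixes q d m y \<delta> E :: nat
  assumes "2 \<le> q" "1 \<le> E" "0 < m"
    and power_bound: "q ^ (d * m) < 2 ^ (m + \<delta> * (E - 1)) * q ^ (y * (E - 1))"
    and log_bound: "ln 2 / ln (real q)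
      \<le> (real d * (real m - 2 * real E + 2) + real E - 1) / (real m + real \<delta> * (real E - 1))"
  shows "2 * d \<le> y"
proof (rule ccontr)
  assume "\<not> 2 * d \<le> y"
  then have y_le: "real y \<le> 2 * real d - 1"
    by linarith
  define Lq where "Lq = ln (real q)"
  define Den where "Den = real m + real \<delta> * (real E - 1)"
  define Num where "Num = real d * (real m - 2 * real E + 2) + real E - 1"
  have "0 < Lq"
    unfolding Lq_def using assms(1) by simp
  have "0 < Den"
    unfolding Den_def using assms(2,3) by (simp add: add_pos_nonneg)
  have "real (q ^ (d * m)) < real (2 ^ (m + \<delta> * (E - 1)) * q ^ (y * (E - 1)))"
    using power_bound by (simp only: of_nat_less_iff)
  then have "ln (real q ^ (d * m)) < ln (2 ^ (m + \<delta> * (E - 1)) * real q ^ (y * (E - 1)))"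
    using assms(1) by (subst ln_less_cancel_iff) simp_all
  then have "real (d * m) * Lq < real (m + \<delta> * (E - 1)) * ln 2 + real (y * (E - 1)) * Lq"
    using assms(1) by (simp add: Lq_def ln_mult ln_realpow)
  then have "real d * real m * Lq < Den * ln 2 + real y * (real E - 1) * Lq"
    using assms(2) by (simp add: Den_def of_nat_diff)
  moreover have "Den * ln 2 \<le> Num * Lq"
    using log_bound \<open>0 < Lq\<close> \<open>0 < Den\<close>
    by (simp add: Lq_def Den_def Num_def divide_le_eq le_divide_eq mult.commute)
  moreover have "real y * (real E - 1) * Lq \<le> (2 * real d - 1) * (real E - 1) * Lq"
    using y_le assms(2) \<open>0 < Lq\<close> by (intro mult_right_mono) auto
  moreover have "Num * Lq + (2 * real d - 1) * (real E - 1) * Lq = real d * real m * Lq"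
    unfolding Num_def by (simp add: algebra_simps)
  ultimately show False
    by linarith
qed

locale power_difference_equation =
  fixes m n q X y1 y2 E N e :: nat
  assumes n_less_m: "n < m"
    and prime_q: "prime q" and odd_q: "odd q"
    and X_gt_1: "1 < X" and coprime_X_q: "coprime X q"
    and y2_pos: "0 < y2" and y2_less_y1: "y2 < y1"
    and equation: "int X ^ m - int X ^ n = int q ^ y1 - int q ^ y2"
    and E_eq: "E = pm_ord (int q) (int X)"
    and N_eq: "N = (m - n) div E"
    and e_eq: "e = multiplicity q N"
    and odd_N: "odd N"
begin

lemma q_gt_2: "2 < q"
  using prime_ge_2_nat[OF prime_q] odd_q by (cases "q = 2") auto

lemma not_dvd_X: "\<not> q dvd X"
  using coprime_X_q prime_q coprime_common_divisor_nat[of X q q] by (auto simp: prime_gt_1_nat)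

lemma equation_nat: "X ^ n * (X ^ (m - n) - 1) = q ^ y2 * (q ^ (y1 - y2) - 1)"
proof -
  have "int (X ^ n * (X ^ (m - n) - 1)) = int X ^ m - int X ^ n"
    using n_less_m X_gt_1
    by (simp add: of_nat_diff right_diff_distrib flip: power_add)
  also have "\<dots> = int (q ^ y2 * (q ^ (y1 - y2) - 1))"
    using equation y2_less_y1 prime_gt_0_nat[OF prime_q]
    by (simp add: of_nat_diff right_diff_distrib flip: power_add)
  finally show ?thesis
    by (simp only: of_nat_eq_iff)
qed

lemma multiplicity_power_diff: "multiplicity q (X ^ (m - n) - 1) = y2"
proof -
  have "X ^ (m - n) > 1"
    using n_less_m X_gt_1 by (intro one_less_power) auto
  have "\<not> q dvd X ^ n"
    using not_dvd_X prime_dvd_power[OF prime_q] by blast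
  then have "multiplicity q (X ^ n * (X ^ (m - n) - 1)) = multiplicity q (X ^ (m - n) - 1)"
    using X_gt_1 \<open>X ^ (m - n) > 1\<close> prime_q
    by (simp add: prime_elem_multiplicity_mult_distrib not_dvd_imp_multiplicity_0)
  moreover have "multiplicity q (q ^ y2 * (q ^ (y1 - y2) - 1)) = y2"
  proof -
    have "\<not> q dvd q ^ (y1 - y2) - 1"
    proof
      assume "q dvd q ^ (y1 - y2) - 1"
      moreover have "q dvd q ^ (y1 - y2)"
        using y2_less_y1 by (simp add: dvd_power)
      ultimately have "q dvd q ^ (y1 - y2) - (q ^ (y1 - y2) - 1)"
        by (simp only: dvd_diff_nat)
      moreover have "q ^ (y1 - y2) - (q ^ (y1 - y2) - 1) = 1"
        using prime_gt_0_nat[OF prime_q] by simp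
      ultimately show False
        using prime_q by simp
    qed
    moreover from this have "q ^ (y1 - y2) - 1 \<noteq> 0"
      by auto
    ultimately show ?thesis
      using prime_q prime_gt_0_nat[OF prime_q]
      by (simp add: prime_elem_multiplicity_mult_distrib not_dvd_imp_multiplicity_0)
  qed
  ultimately show ?thesis
    using equation_nat by simp
qed

lemma power_diff_cong_one: "[X ^ (m - n) = 1] (mod q)"
proof -
  have "q ^ 1 dvd X ^ (m - n) - 1"
    using multiplicity_power_diff y2_pos by (intro multiplicity_dvd') simp
  then show ?thesis
    using X_gt_1 by (simp add: cong_altdef_nat)
qed

lemma int_power_diff_cong_one: "[int X ^ (m - n) = 1] (mod int q)"
  using power_diff_cong_one by (simp flip: cong_int_iff)

lemma E_pos: "0 < E"
  using pm_ord_spec[OF _ disjI1, OF _ int_power_diff_cong_one] n_less_m E_eq by simp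

lemma m_minus_n_eq: "m - n = E * N"
  using pm_ord_dvd[OF _ int_power_diff_cong_one] n_less_m by (simp add: E_eq N_eq)

lemma X_power_E_cong_one: "[X ^ E = 1] (mod q)"
proof -
  have "[int X ^ E = 1] (mod int q)"
    using pm_ord_cong_one[OF _ int_power_diff_cong_one] n_less_m odd_N q_gt_2
    by (simp add: E_eq N_eq)
  then show ?thesis
    by (simp flip: cong_int_iff)
qed

lemma not_cong_one_below_E: "0 < r \<Longrightarrow> r < E \<Longrightarrow> \<not> [X ^ r = 1] (mod q)"
  using pm_ord_minimal(1)[of r "int q" "int X"] by (simp add: E_eq flip: cong_int_iff)

lemma N_pos: "0 < N"
  using odd_N by (rule odd_pos)

lemma multiplicity_I: "multiplicity q (\<Sum>j<N. (X ^ E) ^ j) = e"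
  using multiplicity_sum_powers[OF prime_q odd_q X_power_E_cong_one N_pos] e_eq by simp

lemma X_power_E_gt_1: "1 < X ^ E"
  using one_less_power[OF X_gt_1 E_pos] .

lemma X_power_E_factorisation: "(X ^ E - 1) * (\<Sum>j<N. (X ^ E) ^ j) = X ^ (m - n) - 1"
proof -
  have "1 \<le> X ^ E" "1 \<le> X ^ (E * N)"
    using X_gt_1 by simp_all
  then have "int ((X ^ E - 1) * (\<Sum>j<N. (X ^ E) ^ j)) = int (X ^ (m - n) - 1)"
    using I_poly_geometric[of "int X" E N]
    by (simp add: m_minus_n_eq I_poly_of_nat of_nat_diff)
  then show ?thesis
    by (simp only: of_nat_eq_iff)
qed

lemma multiplicity_X_power_E: "multiplicity q (X ^ E - 1) + e = y2"
proof -
  have "X ^ E - 1 \<noteq> 0" "(\<Sum>j<N. (X ^ E) ^ j) \<noteq> 0"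
    using X_power_E_gt_1 N_pos by auto
  then show ?thesis
    using X_power_E_factorisation multiplicity_power_diff multiplicity_I prime_q
    by (metis prime_elem_multiplicity_mult_distrib prime_imp_prime_elem)
qed

lemma e_less_y2: "e < y2"
proof -
  have "X ^ E - 1 \<noteq> 0"
    using X_power_E_gt_1 by simp
  then have "0 < multiplicity q (X ^ E - 1)"
    using X_power_E_cong_one cong_to_1_nat prime_q
    by (simp add: prime_multiplicity_gt_zero_iff)
  then show ?thesis
    using multiplicity_X_power_E by simp
qed

lemma I_poly_cong: "[I_poly E N (int X) = 0] (mod int q ^ e)"
proof -
  have "q ^ e dvd (\<Sum>j<N. (X ^ E) ^ j)"
    using multiplicity_dvd multiplicity_I by metis
  then show ?thesis
    unfolding I_poly_of_nat cong_0_iff by (metis of_nat_dvd_iff of_nat_power)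
qed

lemma A_poly_E_eq_1: "E = 1 \<Longrightarrow> A_poly E (int X) = int X - 1"
  by (simp add: A_poly_def)

lemma X_minus_1_mult_A_poly: "1 < E \<Longrightarrow> (int X - 1) * A_poly E (int X) = int X ^ E - 1"
  by (simp add: A_poly_geometric)

lemma A_poly_pos: "0 < A_poly E (int X)"
proof (cases "E = 1")
  case False
  have "1 < int X ^ E"
    using X_power_E_gt_1 by (metis of_nat_1 of_nat_less_iff of_nat_power)
  with False have "0 < (int X - 1) * A_poly E (int X)"
    using X_minus_1_mult_A_poly E_pos by simp
  then show ?thesis
    using X_gt_1 by (simp add: zero_less_mult_iff)
qed (use X_gt_1 A_poly_E_eq_1 in simp)

lemma multiplicity_A_poly: "multiplicity (int q) (A_poly E (int X)) = y2 - e"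
proof (cases "E = 1")
  case True
  then show ?thesis
    using A_poly_E_eq_1 multiplicity_X_power_E multiplicity_of_nat[of q "X - 1"] X_gt_1
    by (simp add: of_nat_diff)
next
  case False
  then have "1 < E"
    using E_pos by simp
  then have "\<not> q dvd X - 1"
    using not_cong_one_below_E[of 1] X_gt_1 by (simp add: cong_altdef_nat)
  then have "multiplicity (int q) (int X - 1) = 0"
    using multiplicity_of_nat[of q "X - 1"] X_gt_1 by (simp add: of_nat_diff not_dvd_imp_multiplicity_0)
  moreover have "multiplicity (int q) ((int X - 1) * A_poly E (int X)) = y2 - e"
    using X_minus_1_mult_A_poly[OF \<open>1 < E\<close>] multiplicity_X_power_E multiplicity_of_nat[of q "X ^ E - 1"]
      X_power_E_gt_1 by (simp add: of_nat_diff)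
  ultimately show ?thesis
    using A_poly_pos X_gt_1 prime_q
    by (simp add: prime_elem_multiplicity_mult_distrib)
qed

lemma A_poly_factorisation:
  obtains K where "0 < K" "coprime K (int q)" "A_poly E (int X) = K * int q ^ (y2 - e)"
proof -
  have "A_poly E (int X) \<noteq> 0" "\<not> is_unit (int q)"
    using A_poly_pos prime_q by (auto simp: not_prime_unit)
  then obtain K where K: "A_poly E (int X) = int q ^ (y2 - e) * K" "\<not> int q dvd K"
    using multiplicity_decompose' multiplicity_A_poly by metis
  have "0 < K"
    using A_poly_pos K(1) prime_gt_0_nat[OF prime_q] by (simp add: zero_less_mult_iff)
  moreover have "coprime K (int q)"
    using prime_imp_coprime[of "int q" K] K(2) prime_q by (simp add: coprime_commute)
  ultimately show ?thesis
    using that K(1) by (simp add: mult.commute)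
qed

lemma power_diff_less: "int X ^ m - int X ^ n < int q ^ y1"
  using equation prime_gt_0_nat[OF prime_q] by simp

lemma X_power_pred_le: "int X ^ (m - 1) * (int X - 1) \<le> int X ^ m - int X ^ n"
proof -
  have "int X ^ n \<le> int X ^ (m - 1)"
    using n_less_m X_gt_1 by (intro power_increasing) auto
  moreover have "int X ^ m = int X ^ (m - 1) * int X"
    using n_less_m by (simp flip: power_Suc2)
  ultimately show ?thesis
    by (simp add: right_diff_distrib)
qed

lemma B_I_K_eq:
  assumes "A_poly E (int X) = K * int q ^ (y2 - e)"
  shows "B_poly n E (int X) * I_poly E N (int X) * K = int q ^ e * (int q ^ (y1 - y2) - 1)"
proof -
  have "int q ^ (y2 - e) * (B_poly n E (int X) * I_poly E N (int X) * K)
      = int X ^ n * ((int X ^ E - 1) * I_poly E N (int X))"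
    using assms B_poly_mult_A_poly[of n E "int X"] by (simp add: mult_ac)
  also have "\<dots> = int X ^ m - int X ^ n"
    using n_less_m by (simp add: I_poly_geometric right_diff_distrib flip: m_minus_n_eq power_add)
  also have "\<dots> = int q ^ (y2 - e) * (int q ^ e * (int q ^ (y1 - y2) - 1))"
    using equation e_less_y2 y2_less_y1
    by (simp add: right_diff_distrib mult.assoc flip: power_add)
  finally show ?thesis
    using prime_gt_0_nat[OF prime_q] by simp
qed

lemma y1_bound_E_eq_1:
  assumes "E = 1" "0 < K" "A_poly E (int X) = K * int q ^ (y2 - e)"
  shows "m * (y2 - e) < y1"
proof -
  have "int q ^ (y2 - e) \<le> K * int q ^ (y2 - e)"
    using assms(2) by (simp add: mult_le_cancel_right1)
  then have q_power_le: "int q ^ (y2 - e) \<le> int X - 1"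
    using assms(3) A_poly_E_eq_1[OF assms(1)] by simp
  have "int q ^ ((y2 - e) * m) = (int q ^ (y2 - e)) ^ (m - 1) * int q ^ (y2 - e)"
    using n_less_m by (simp add: power_mult flip: power_Suc2)
  also have "\<dots> \<le> int X ^ (m - 1) * (int X - 1)"
    using q_power_le X_gt_1 by (intro mult_mono power_mono) simp_all
  also have "\<dots> < int q ^ y1"
    using X_power_pred_le power_diff_less by linarith
  finally show ?thesis
    using prime_gt_1_nat[OF prime_q] by (simp add: mult.commute)
qed

lemma X_power_le_I_poly: "int X ^ (m - E) \<le> int X ^ n * I_poly E N (int X)"
proof -
  have "m - E = n + E * (N - 1)"
    using m_minus_n_eq N_pos n_less_m by (simp add: right_diff_distrib')
  then have "int X ^ (m - E) = int X ^ n * (int X ^ E) ^ (N - 1)"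
    by (simp add: power_add power_mult)
  moreover have "(int X ^ E) ^ (N - 1) \<le> I_poly E N (int X)"
    unfolding I_poly_def power_mult using N_pos by (intro member_le_sum) auto
  ultimately show ?thesis
    by (simp add: mult_left_mono)
qed

lemma X_power_mult_less: "int X ^ (m - E) * (int X ^ E - 1) < int q ^ y1"
proof -
  have "0 \<le> int X ^ E - 1"
    using X_gt_1 by simp
  then have "int X ^ (m - E) * (int X ^ E - 1) \<le> int X ^ n * I_poly E N (int X) * (int X ^ E - 1)"
    by (rule mult_right_mono[OF X_power_le_I_poly])
  also have "\<dots> = int X ^ n * ((int X ^ E - 1) * I_poly E N (int X))"
    by (simp only: mult_ac)
  also have "\<dots> = int X ^ m - int X ^ n"
    using n_less_m by (simp add: I_poly_geometric right_diff_distrib flip: m_minus_n_eq power_add)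
  also have "\<dots> < int q ^ y1"
    by (rule power_diff_less)
  finally show ?thesis .
qed

lemma E_le_m: "E \<le> m"
proof -
  have "E \<le> m - n"
    using m_minus_n_eq N_pos by simp
  then show ?thesis
    by simp
qed

lemma y1_bound_K_gt_1:
  assumes "1 < E" "1 < K" "A_poly E (int X) = K * int q ^ (y2 - e)"
  shows "real m / (real E - 1) * (real y2 - real e) \<le> real y1"
proof -
  define u where "u = (int X - 1) * K"
  have "int X \<le> (int X - 1) * 2"
    using X_gt_1 by simp
  also have "\<dots> \<le> u"
    unfolding u_def using assms(2) X_gt_1 by (intro mult_left_mono) simp_all
  finally have "int X \<le> u" .
  have q_power_u: "int q ^ (y2 - e) * u = int X ^ E - 1"
    using X_minus_1_mult_A_poly[OF assms(1)] assms(3) by (simp add: u_def mult_ac)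
  have "(m - E + (E - 1) + 1) * (y2 - e) < (E - 1) * y1"
  proof (rule exponent_bound_of_power_bounds)
    show "int q ^ (y2 - e) * u < int X ^ (E - 1 + 1)"
      using q_power_u assms(1) by simp
    show "int X ^ (m - E) * u * int q ^ (y2 - e) < int q ^ y1"
      using X_power_mult_less by (simp only: mult.assoc mult.commute[of u] q_power_u)
  qed (use X_gt_1 \<open>int X \<le> u\<close> prime_gt_1_nat[OF prime_q] in simp_all)
  then have "m * (y2 - e) \<le> (E - 1) * y1"
    using assms(1) E_le_m by simp
  then have "real m * real (y2 - e) \<le> real (E - 1) * real y1"
    by (metis of_nat_le_iff of_nat_mult)
  then have "real m * (real y2 - real e) \<le> (real E - 1) * real y1"
    using assms(1) e_less_y2 by (simp add: of_nat_diff)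
  moreover have "real m / (real E - 1) * (real y2 - real e) = real m * (real y2 - real e) / (real E - 1)"
    by simp
  ultimately show ?thesis
    using assms(1) by (simp add: pos_divide_le_eq mult.commute)
qed

lemma X_power_m_le: "X ^ m \<le> 2 ^ (if q ^ y1 < X ^ m then 1 else 0) * q ^ y1"
proof (cases "q ^ y1 < X ^ m")
  case True
  have "int X ^ m = int X ^ (m - 1) * int X"
    using n_less_m by (simp flip: power_Suc2)
  also have "\<dots> \<le> 2 * (int X ^ (m - 1) * (int X - 1))"
    using X_gt_1 by (simp add: mult_left_mono)
  also have "\<dots> < 2 * int q ^ y1"
    using X_power_pred_le power_diff_less by linarith
  finally have "int (X ^ m) < int (2 * q ^ y1)"
    by simp
  then have "X ^ m < 2 * q ^ y1"
    by (simp only: of_nat_less_iff)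
  then show ?thesis
    using True by simp
qed simp

lemma y1_bound_two:
  assumes "1 < E" "0 < K" "A_poly E (int X) = K * int q ^ (y2 - e)"
    and "X ^ m \<le> 2 ^ \<delta> * q ^ y1"
    and "ln 2 / ln (real q) \<le> ((real y2 - real e) * (real m - 2 * real E + 2) + real E - 1)
                                 / (real m + real \<delta> * (real E - 1))"
  shows "2 * (y2 - e) \<le> y1"
proof -
  have "int X \<le> (int X - 1) * 2"
    using X_gt_1 by simp
  have "(int X - 1) * int q ^ (y2 - e) \<le> (int X - 1) * A_poly E (int X)"
    using assms(2,3) X_gt_1 by (intro mult_left_mono) (simp_all add: mult_le_cancel_right1)
  also have "\<dots> < int X * int X ^ (E - 1)"
    using X_minus_1_mult_A_poly[OF assms(1)] assms(1) by (simp flip: power_Suc)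
  also have "\<dots> \<le> (int X - 1) * 2 * int X ^ (E - 1)"
    using \<open>int X \<le> (int X - 1) * 2\<close> by (rule mult_right_mono) simp
  finally have "(int X - 1) * int q ^ (y2 - e) < (int X - 1) * (2 * int X ^ (E - 1))"
    by (simp only: mult.assoc)
  moreover have "0 < int X - 1"
    using X_gt_1 by simp
  ultimately have "int q ^ (y2 - e) < 2 * int X ^ (E - 1)"
    by (simp only: mult_less_cancel_left_pos)
  then have "int (q ^ (y2 - e)) < int (2 * X ^ (E - 1))"
    by simp
  then have "q ^ (y2 - e) < 2 * X ^ (E - 1)"
    by (simp only: of_nat_less_iff)
  then have "q ^ ((y2 - e) * m) < (2 * X ^ (E - 1)) ^ m"
    unfolding power_mult using n_less_m by (intro power_strict_mono) auto
  also have "\<dots> = 2 ^ m * (X ^ m) ^ (E - 1)"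
    by (simp add: power_mult_distrib power_mult[symmetric] mult.commute)
  also have "\<dots> \<le> 2 ^ m * (2 ^ \<delta> * q ^ y1) ^ (E - 1)"
    using assms(4) by (intro mult_left_mono power_mono) simp_all
  also have "\<dots> = 2 ^ (m + \<delta> * (E - 1)) * q ^ (y1 * (E - 1))"
    by (simp add: power_add power_mult_distrib power_mult)
  finally have power_bound: "q ^ ((y2 - e) * m) < 2 ^ (m + \<delta> * (E - 1)) * q ^ (y1 * (E - 1))" .
  show ?thesis
  proof (rule exponent_bound_of_log_bound[OF _ _ _ power_bound])
    show "ln 2 / ln (real q) \<le> (real (y2 - e) * (real m - 2 * real E + 2) + real E - 1)
                                 / (real m + real \<delta> * (real E - 1))"
      using assms(5) e_less_y2 by (simp add: of_nat_diff)
  qed (use assms(1) n_less_m prime_ge_2_nat[OF prime_q] in auto)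
qed

end

theorem mainTheorem7:
  fixes m n q X y1 y2 :: nat
  assumes "n > 0" "m > n" "m \<ge> 3"
    and "prime q" "odd q"
    and "X > 1" "coprime X q"
    and "y2 > 0" "y1 > y2"
    and "int X ^ m - int X ^ n = int q ^ y1 - int q ^ y2"
  defines "E \<equiv> pm_ord (int q) (int X)"
  defines "N \<equiv> (m - n) div E"
  defines "e \<equiv> multiplicity q N"
  defines "\<delta> \<equiv> (if X ^ m > q ^ y1 then 1 else 0 :: nat)"
  assumes "odd N"
  shows "y2 > e \<and> [I_poly E N (int X) = 0] (mod (int q ^ e)) \<and>
    (\<exists>K::int. K > 0 \<and> coprime K (int q) \<and>
       A_poly E (int X) = K * int q ^ (y2 - e) \<and>
       B_poly n E (int X) * I_poly E N (int X) * K = int q ^ e * (int q ^ (y1 - y2) - 1) \<and>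
       (E = 1 \<longrightarrow> y1 > 2 * (y2 - e) \<and> (K > 1 \<longrightarrow> y1 > m * (y2 - e))) \<and>
       (E > 1 \<longrightarrow>
          (K > 1 \<longrightarrow> real y1 \<ge> real m / (real E - 1) * (real y2 - real e)) \<and>
          (((real y2 - real e) * (real m - 2 * real E + 2) + real E - 1) / (real m + real \<delta> * (real E - 1))
             \<ge> ln 2 / ln (real q) \<longrightarrow> y1 \<ge> 2 * (y2 - e))))"
proof -
  interpret power_difference_equation m n q X y1 y2 E N e
    by unfold_locales (use assms in \<open>simp_all add: E_def N_def e_def\<close>)
  obtain K where K: "0 < K" "coprime K (int q)" "A_poly E (int X) = K * int q ^ (y2 - e)"
    by (rule A_poly_factorisation)
  have E_eq_1: "2 * (y2 - e) < y1 \<and> (1 < K \<longrightarrow> m * (y2 - e) < y1)" if "E = 1"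
  proof -
    have "2 * (y2 - e) \<le> m * (y2 - e)"
      using \<open>m \<ge> 3\<close> by simp
    then show ?thesis
      using y1_bound_E_eq_1[OF that K(1,3)] by linarith
  qed
  show ?thesis
    unfolding \<delta>_def
    using e_less_y2 I_poly_cong K B_I_K_eq[OF K(3)] E_eq_1
      y1_bound_K_gt_1[OF _ _ K(3)] y1_bound_two[OF _ K(1,3) X_power_m_le]
    by blast
qed

end
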